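(* Let $\phi=\phi_{\mathrm{NH}}$, $\phi_{\mathrm{NH}}(y,t)=t^{-1/2}\exp(y^2/(2t))$, and $\Phi(\boldsymbol x,t)=\sum_{i=1}^N\phi(x_i,t)$. Then for all $\boldsymbol x\in\mathbb{R}^N$ and $t>0$, $$\mathrm{DErr}_\Phi(\boldsymbol x,t)\le\frac{\max_i x_i^2/t+4}{4t}.$$
   Context: $\mathrm{DErr}_\Phi(\boldsymbol x,t):=\dfrac{\sum_{i=1}^N\frac{\partial^4}{\partial x^4}\phi(x_i,t)}{4\sum_{i=1}^N\partial_{xx}\phi(x_i,t)}-\dfrac{1}{4\Phi(\boldsymbol x,t)}\sum_{i=1}^N\partial_{xx}\phi(x_i,t)$, where derivatives are in the first argument of $\phi$. *)

theory Defs
  imports "HOL-Analysis.Analysis"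
begin

definition phiNH :: "real \<Rightarrow> real \<Rightarrow> real" where
  "phiNH y t = t powr (-1/2) * exp (y^2 / (2*t))"

definition dx :: "nat \<Rightarrow> (real \<Rightarrow> real \<Rightarrow> real) \<Rightarrow> real \<Rightarrow> real \<Rightarrow> real" where
  "dx k phi y t = (deriv ^^ k) (\<lambda>z. phi z t) y"

definition PhiSum :: "(real \<Rightarrow> real \<Rightarrow> real) \<Rightarrow> real ^ 'n \<Rightarrow> real \<Rightarrow> real" where
  "PhiSum phi x t = (\<Sum>i\<in>UNIV. phi (x $ i) t)"

definition DErr :: "(real \<Rightarrow> real \<Rightarrow> real) \<Rightarrow> real ^ 'n \<Rightarrow> real \<Rightarrow> real" where
  "DErr phi x t =
     (\<Sum>i\<in>UNIV. dx 4 phi (x $ i) t) / (4 * (\<Sum>i\<in>UNIV. dx 2 phi (x $ i) t))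
     - (1 / (4 * PhiSum phi x t)) * (\<Sum>i\<in>UNIV. dx 2 phi (x $ i) t)"

end

theory Submission
  imports Defs
begin

text \<open>The spatial derivatives of \<open>\<phi> = phiNH\<close> are \<open>\<phi>\<close> times polynomials in
  \<open>u = y\<^sup>2/t\<close>: \<open>\<partial>\<^sub>x\<^sub>x \<phi> = (1 + u) \<phi> / t\<close> and \<open>\<partial>\<^sup>4\<^sub>x \<phi> = (3 + 6u + u\<^sup>2) \<phi> / t\<^sup>2\<close>.
  With the positive weights \<open>\<phi>(x\<^sub>i,t)\<close> the error is therefore
  \<open>(\<Sum>(3 + 6u\<^sub>i + u\<^sub>i\<^sup>2)\<phi>\<^sub>i / \<Sum>(1 + u\<^sub>i)\<phi>\<^sub>i - \<Sum>(1 + u\<^sub>i)\<phi>\<^sub>i / \<Sum>\<phi>\<^sub>i) / 4t\<close>.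
  Since \<open>3 + 6u + u\<^sup>2 \<le> (M + 5)(1 + u)\<close> for \<open>0 \<le> u \<le> M\<close>, the first ratio is at most \<open>M + 5\<close>,
  and the second is at least \<open>1\<close>.\<close>

lemma deriv_times_exp_square:
  fixes t :: real
  assumes "t \<noteq> 0"
    and "\<And>z. (q has_real_derivative q' z) (at z)"
    and "\<And>z. q' z + z / t * q z = r z"
  shows "deriv (\<lambda>z. q z * exp (z\<^sup>2 / (2 * t))) = (\<lambda>z. r z * exp (z\<^sup>2 / (2 * t)))"
proof
  fix z
  have "((\<lambda>z. q z * exp (z\<^sup>2 / (2 * t))) has_real_derivative
          (q' z + z / t * q z) * exp (z\<^sup>2 / (2 * t))) (at z)"
    using assms(1,2) by (auto intro!: derivative_eq_intros simp: field_simps)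
  then show "deriv (\<lambda>z. q z * exp (z\<^sup>2 / (2 * t))) z = r z * exp (z\<^sup>2 / (2 * t))"
    unfolding assms(3) by (rule DERIV_imp_deriv)
qed

lemma deriv_iterates_phiNH:
  fixes t :: real
  assumes t: "t \<noteq> 0"
  shows "(deriv ^^ 2) (\<lambda>z. phiNH z t) = (\<lambda>z. (1 + z\<^sup>2 / t) * phiNH z t / t)"
    and "(deriv ^^ 4) (\<lambda>z. phiNH z t) =
           (\<lambda>z. (3 + 6 * (z\<^sup>2 / t) + (z\<^sup>2 / t)\<^sup>2) * phiNH z t / t\<^sup>2)"
proof -
  define c where "c = t powr (-1/2)"
  have d1: "deriv (\<lambda>z. c * exp (z\<^sup>2 / (2 * t))) = (\<lambda>z. c * (z / t) * exp (z\<^sup>2 / (2 * t)))"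
    by (rule deriv_times_exp_square[OF t]) (auto intro!: derivative_eq_intros)
  have d2: "deriv (\<lambda>z. c * (z / t) * exp (z\<^sup>2 / (2 * t))) =
              (\<lambda>z. c * (1 / t + z\<^sup>2 / t\<^sup>2) * exp (z\<^sup>2 / (2 * t)))"
    by (rule deriv_times_exp_square[OF t])
       (auto intro!: derivative_eq_intros simp: t field_simps power2_eq_square)
  have d3: "deriv (\<lambda>z. c * (1 / t + z\<^sup>2 / t\<^sup>2) * exp (z\<^sup>2 / (2 * t))) =
              (\<lambda>z. c * (3 * z / t\<^sup>2 + z ^ 3 / t ^ 3) * exp (z\<^sup>2 / (2 * t)))"
    by (rule deriv_times_exp_square[OF t])
       (auto intro!: derivative_eq_intros simp: t field_simps power2_eq_square power3_eq_cube)
  have d4: "deriv (\<lambda>z. c * (3 * z / t\<^sup>2 + z ^ 3 / t ^ 3) * exp (z\<^sup>2 / (2 * t))) =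
              (\<lambda>z. c * (3 / t\<^sup>2 + 6 * z\<^sup>2 / t ^ 3 + z ^ 4 / t ^ 4) * exp (z\<^sup>2 / (2 * t)))"
    by (rule deriv_times_exp_square[OF t])
       (auto intro!: derivative_eq_intros
         simp: t field_simps power2_eq_square power3_eq_cube power4_eq_xxxx)
  have phi: "phiNH z t = c * exp (z\<^sup>2 / (2 * t))" for z
    unfolding phiNH_def c_def ..
  have "(deriv ^^ 2) (\<lambda>z. phiNH z t) = deriv (deriv (\<lambda>z. c * exp (z\<^sup>2 / (2 * t))))"
    by (simp add: numeral_eq_Suc phi)
  also have "\<dots> = (\<lambda>z. c * (1 / t + z\<^sup>2 / t\<^sup>2) * exp (z\<^sup>2 / (2 * t)))"
    by (simp only: d1 d2)
  also have "\<dots> = (\<lambda>z. (1 + z\<^sup>2 / t) * phiNH z t / t)"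
    using t by (simp add: phi field_simps power2_eq_square)
  finally show "(deriv ^^ 2) (\<lambda>z. phiNH z t) = (\<lambda>z. (1 + z\<^sup>2 / t) * phiNH z t / t)" .
  have "(deriv ^^ 4) (\<lambda>z. phiNH z t) =
          deriv (deriv (deriv (deriv (\<lambda>z. c * exp (z\<^sup>2 / (2 * t))))))"
    by (simp add: numeral_eq_Suc phi)
  also have "\<dots> = (\<lambda>z. c * (3 / t\<^sup>2 + 6 * z\<^sup>2 / t ^ 3 + z ^ 4 / t ^ 4) * exp (z\<^sup>2 / (2 * t)))"
    by (simp only: d1 d2 d3 d4)
  also have "\<dots> = (\<lambda>z. (3 + 6 * (z\<^sup>2 / t) + (z\<^sup>2 / t)\<^sup>2) * phiNH z t / t\<^sup>2)"
    using t by (simp add: phi field_simps power2_eq_square power3_eq_cube power4_eq_xxxx)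
  finally show "(deriv ^^ 4) (\<lambda>z. phiNH z t) =
                  (\<lambda>z. (3 + 6 * (z\<^sup>2 / t) + (z\<^sup>2 / t)\<^sup>2) * phiNH z t / t\<^sup>2)" .
qed

lemma phiNH_pos: "t > 0 \<Longrightarrow> phiNH y t > 0"
  by (simp add: phiNH_def)

lemma quartic_le_linear_bound:
  fixes u M :: real
  assumes "0 \<le> u" "u \<le> M"
  shows "3 + 6 * u + u\<^sup>2 \<le> (M + 5) * (1 + u)"
proof -
  have "0 \<le> (M - u) * (1 + u)" using assms by simp
  then show ?thesis by (simp add: algebra_simps power2_eq_square)
qed

lemma weighted_ratio_gap_le:
  fixes w u :: "'a \<Rightarrow> real" and A :: "'a set"
  assumes "finite A" "A \<noteq> {}"
    and w: "\<And>i. i \<in> A \<Longrightarrow> w i > 0"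
    and u: "\<And>i. i \<in> A \<Longrightarrow> 0 \<le> u i" "\<And>i. i \<in> A \<Longrightarrow> u i \<le> M"
  shows "(\<Sum>i\<in>A. (3 + 6 * u i + (u i)\<^sup>2) * w i) / (\<Sum>i\<in>A. (1 + u i) * w i)
           - (\<Sum>i\<in>A. (1 + u i) * w i) / (\<Sum>i\<in>A. w i) \<le> M + 4"
proof -
  let ?S0 = "\<Sum>i\<in>A. w i" and ?S2 = "\<Sum>i\<in>A. (1 + u i) * w i"
  have S0: "?S0 > 0" using assms(1,2) w by (simp add: sum_pos)
  have S2_ge_S0: "?S0 \<le> ?S2" using w u by (intro sum_mono) simp
  have "(\<Sum>i\<in>A. (3 + 6 * u i + (u i)\<^sup>2) * w i) \<le> (\<Sum>i\<in>A. (M + 5) * ((1 + u i) * w i))"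
    using w u quartic_le_linear_bound
    by (intro sum_mono) (metis mult.assoc mult_right_mono less_imp_le)
  then have "(\<Sum>i\<in>A. (3 + 6 * u i + (u i)\<^sup>2) * w i) / ?S2 \<le> M + 5"
    using S0 S2_ge_S0 by (simp add: divide_le_eq sum_distrib_left[symmetric])
  moreover have "1 \<le> ?S2 / ?S0" using S0 S2_ge_S0 by simp
  ultimately show ?thesis by linarith
qed

lemma DErr_phiNH_eq:
  fixes x :: "real ^ 'n" and t :: real
  assumes "t > 0"
  defines "u \<equiv> \<lambda>i. (x $ i)\<^sup>2 / t" and "w \<equiv> \<lambda>i. phiNH (x $ i) t"
  shows "DErr phiNH x t =
           ((\<Sum>i\<in>UNIV. (3 + 6 * u i + (u i)\<^sup>2) * w i) / (\<Sum>i\<in>UNIV. (1 + u i) * w i)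
            - (\<Sum>i\<in>UNIV. (1 + u i) * w i) / (\<Sum>i\<in>UNIV. w i)) / (4 * t)"
proof -
  have "w i > 0" for i using assms(1) by (simp add: w_def phiNH_pos)
  then have "(\<Sum>i\<in>UNIV. w i) > 0" "(\<Sum>i\<in>UNIV. (1 + u i) * w i) > 0"
    using assms(1) by (auto intro!: sum_pos simp: u_def add_pos_nonneg)
  then show ?thesis
    using assms(1)
    by (simp add: DErr_def PhiSum_def dx_def deriv_iterates_phiNH u_def w_def
                  sum_divide_distrib[symmetric] field_simps power2_eq_square)
qed

theorem lemma6p6:
  fixes x :: "real ^ 'n" and t :: real
  assumes "t > 0"
  shows "DErr phiNH x t \<le> ((MAX i\<in>UNIV. (x $ i)^2) / t + 4) / (4 * t)"
proof -
  let ?M = "(MAX i\<in>UNIV. (x $ i)\<^sup>2) / t"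
  have "(x $ i)\<^sup>2 / t \<le> ?M" for i
    using assms by (intro divide_right_mono) auto
  moreover have "phiNH (x $ i) t > 0" for i
    using assms by (rule phiNH_pos)
  ultimately show ?thesis
    unfolding DErr_phiNH_eq[OF assms]
    using assms weighted_ratio_gap_le[of UNIV "\<lambda>i. phiNH (x $ i) t" "\<lambda>i. (x $ i)\<^sup>2 / t" ?M]
    by (intro divide_right_mono) auto
qed

end
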